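(* Consider a distributed storage system $\mathcal{D}(n,k,d)$ with node storage capacity $\alpha$ and repair bandwidth $\gamma=d\beta$, in the presence of an omniscient active adversary controlling any $b\ge 1$ nodes. If $2b<k$, its resiliency capacity satisfies \[ C_r(\alpha,\gamma)\le\sum_{i=2b+1}^{k}\min\{(d-i+1)\beta,\ \alpha\}. \] If $2b\ge k$, then $C_r(\alpha,\gamma)=0$.
   Context: A distributed storage system (DSS) $\mathcal{D}(n,k,d)$, $k\le d\le n-1$: a source stores a file (a message $m$ from a finite set, all messages equally likely) on $n$ storage nodes, each storing at most $\alpha$ symbols. Nodes fail one at a time; each failed node is replaced by a new node that connects to some $d$ of the remaining $n-1$ active nodes and downloads $\beta=\gamma/d$ symbols from each (symmetric repair), then stores at most $\alpha$ symbols. A data collector connects to any $k$ simultaneously active nodes, downloads their stored contents, and must recover the file. An omniscient adversary knows the file, the storage/repair/decoding schemes and all stored data, and may control any $b$ nodes among all nodes ever in the system (initial nodes and/or replacement nodes, possibly at different times): for a controlled node it may arbitrarily alter the stored data and the messages that node sends to replacement nodes during repair and to data collectors. The resiliency capacity $C_r(\alpha,\gamma)$ is the maximum amount of data (file size, in symbols) that can be stored so that every data collector connecting to any $k$ active nodes, for any failure/repair sequence, recovers the file correctly whatever the adversary's choice of controlled nodes and actions. *)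

theory Defs
  imports Complex_Main "HOL-Library.Extended_Real"
begin

text \<open>Symbols are natural numbers below the alphabet size q.  Storage slots are 0..n-1.
  A failure/repair schedule is a list of steps (f, H): the node in slot f fails and
  the new node in slot f downloads from the helper slots H (|H| = d, f not in H).
  Nodes ever in the system are identified by (creation time, slot): initial nodes
  have creation time 0, the node created at step t (0-based) has creation time t+1.\<close>

type_synonym schedule = "(nat \<times> nat set) list"
type_synonym node_id = "nat \<times> nat"

definition valid_schedule :: "nat \<Rightarrow> nat \<Rightarrow> schedule \<Rightarrow> bool" where
  "valid_schedule n d s \<longleftrightarrow>
     (\<forall>st \<in> set s. fst st < n \<and> snd st \<subseteq> {..<n} - {fst st} \<and> card (snd st) = d)"

text \<open>creation time of the node active in slot j after the first t steps\<close>
primrec act :: "schedule \<Rightarrow> nat \<Rightarrow> nat \<Rightarrow> nat" where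
  "act s 0 j = 0"
| "act s (Suc t) j = (if fst (s ! t) = j then Suc t else act s t j)"

text \<open>All functions may depend on the public
  failure/repair history.
  enc j m: content of initial node j for file m;
  hmsg hist h c: message sent by the helper in slot h storing c (hist includes current step);
  rep hist r: content of the new node given received messages r (indexed by helper slot);
  dec hist K c: file decoded by a data collector from the contents c of the slots in K.\<close>
record scheme =
  enc :: "nat \<Rightarrow> nat \<Rightarrow> nat list"
  hmsg :: "schedule \<Rightarrow> nat \<Rightarrow> nat list \<Rightarrow> nat list"
  rep :: "schedule \<Rightarrow> (nat \<Rightarrow> nat list) \<Rightarrow> nat list"
  dec :: "schedule \<Rightarrow> nat set \<Rightarrow> (nat \<Rightarrow> nat list) \<Rightarrow> nat"

definition valid_word :: "nat \<Rightarrow> nat \<Rightarrow> nat list \<Rightarrow> bool" where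
  "valid_word q l xs \<longleftrightarrow> length xs = l \<and> set xs \<subseteq> {..<q}"

text \<open>Honest stored content of the node active in slot j after t steps, when the file is m,
  the adversary controls the node set B and sends am t x (instead of the honest message)
  from a controlled node x acting as helper at step t.\<close>
primrec stored ::
  "scheme \<Rightarrow> schedule \<Rightarrow> nat \<Rightarrow> node_id set \<Rightarrow> (nat \<Rightarrow> node_id \<Rightarrow> nat list)
     \<Rightarrow> nat \<Rightarrow> nat \<Rightarrow> nat list" where
  "stored S s m B am 0 j = enc S j m"
| "stored S s m B am (Suc t) j =
     (if j = fst (s ! t) then
        rep S (take (Suc t) s)
          (\<lambda>h. if h \<in> snd (s ! t) then
                 (if (act s t h, h) \<in> B then am t (act s t h, h)
                  else hmsg S (take (Suc t) s) h (stored S s m B am t h))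
               else [])
      else stored S s m B am t j)"

text \<open>Content reported to a data collector by slot j at the end of schedule s
  (a controlled node reports ac x instead).\<close>
definition reported ::
  "scheme \<Rightarrow> schedule \<Rightarrow> nat \<Rightarrow> node_id set \<Rightarrow> (nat \<Rightarrow> node_id \<Rightarrow> nat list)
     \<Rightarrow> (node_id \<Rightarrow> nat list) \<Rightarrow> nat \<Rightarrow> nat list" where
  "reported S s m B am ac j =
     (if (act s (length s) j, j) \<in> B then ac (act s (length s) j, j)
      else stored S s m B am (length s) j)"

text \<open>S is a valid scheme over alphabet size q storing M messages, node storage alpha,
  per-helper download beta, which is resilient against b controlled nodes.\<close>
definition resilient_scheme ::
  "nat \<Rightarrow> nat \<Rightarrow> nat \<Rightarrow> nat \<Rightarrow> nat \<Rightarrow> nat \<Rightarrow> nat \<Rightarrow> nat \<Rightarrow> scheme \<Rightarrow> bool" where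
  "resilient_scheme n k d b \<alpha> \<beta> q M S \<longleftrightarrow>
     (\<forall>j m. j < n \<longrightarrow> m < M \<longrightarrow> valid_word q \<alpha> (enc S j m)) \<and>
     (\<forall>hist h c. valid_word q \<beta> (hmsg S hist h c)) \<and>
     (\<forall>hist r. valid_word q \<alpha> (rep S hist r)) \<and>
     (\<forall>s m B am ac K.
        valid_schedule n d s \<longrightarrow> m < M \<longrightarrow> finite B \<longrightarrow> card B \<le> b \<longrightarrow>
        (\<forall>t x. valid_word q \<beta> (am t x)) \<longrightarrow> (\<forall>x. valid_word q \<alpha> (ac x)) \<longrightarrow>
        K \<subseteq> {..<n} \<longrightarrow> card K = k \<longrightarrow>
        dec S s K (\<lambda>j. if j \<in> K then reported S s m B am ac j else []) = m)"

text \<open>Resiliency capacity (file size log_q M in symbols), with gamma = d * beta.\<close>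
definition resiliency_capacity ::
  "nat \<Rightarrow> nat \<Rightarrow> nat \<Rightarrow> nat \<Rightarrow> nat \<Rightarrow> nat \<Rightarrow> ereal" where
  "resiliency_capacity n k d b \<alpha> \<beta> =
     Sup {ereal (log (real q) (real M)) | q M S.
            2 \<le> q \<and> 1 \<le> M \<and> resilient_scheme n k d b \<alpha> \<beta> q M S}"

end

theory Submission
  imports Defs
begin

(* Put c = min (2b) k.  Among the first k slots, the slots c..k-1 are handled as in the
   cut-set bound: a slot i with (d - i) * beta < alpha is failed and repaired from the helpers
   {0..d} - {i} (in increasing order of i), every other slot keeps its initial content.
   The fingerprint of a file m is the content of the unrepaired slots together with the
   messages sent by helpers above i that still hold their initial content; it has exactly
   L = sum_{i=c}^{k-1} min ((d - i) * beta, alpha) symbols.  If two files m, m' have equal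
   fingerprints, consider two worlds: with file m the adversary controls the initial nodes of
   slots < min b c and lets them behave as for m'; with file m' it controls the initial nodes
   of slots min b c .. c-1 and lets them behave as for m.  Induction along the repair schedule
   shows that a data collector reading slots 0..k-1 sees the same data in both worlds, so
   resilience forces m = m'.  Hence the fingerprint is injective, M <= q ^ L, and
   C_r <= L; the theorem is this bound after reindexing, and for k <= 2b it gives C_r <= 0.
   The file develops, in order: list facts, the repair schedule and its unrepaired slots, the
   two-worlds locale (agreement of the views), injectivity of the fingerprint, the counting
   bound M <= q ^ L, the capacity bound, and finally the theorem. *)

lemma sum_list_filter_partition:
  fixes f g :: "'a \<Rightarrow> 'b::comm_monoid_add"
  shows "sum_list (map f (filter P xs)) + sum_list (map g (filter (\<lambda>x. \<not> P x) xs))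
       = sum_list (map (\<lambda>x. if P x then f x else g x) xs)"
  by (induction xs) (auto simp: ac_simps)

lemma concat_eq_by_lengths:
  "concat xs = concat ys \<Longrightarrow> map length xs = map length ys \<Longrightarrow> xs = ys"
proof (induction xs arbitrary: ys)
  case (Cons x xs)
  then obtain y ys' where ys: "ys = y # ys'" "length x = length y" by (cases ys) auto
  with Cons.prems have "x = y" "concat xs = concat ys'" by auto
  with Cons ys show ?case by simp
qed simp

lemma sorted_less_notin_drop:
  fixes xs :: "nat list"
  assumes "sorted_wrt (<) xs" "t < length xs" "h < xs ! t"
  shows "h \<notin> set (drop t xs)"
proof -
  have "sorted_wrt (<) (xs ! t # drop (Suc t) xs)"
    using assms(1,2) sorted_wrt_drop[of "(<)" xs t] by (simp add: Cons_nth_drop_Suc)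
  then have "\<forall>x\<in>set (drop t xs). xs ! t \<le> x"
    using assms(2) by (auto simp: Cons_nth_drop_Suc[symmetric] less_imp_le)
  then show ?thesis using assms(3) by auto
qed

lemma sorted_greater_notin_take:
  fixes xs :: "nat list"
  assumes "sorted_wrt (<) xs" "t < length xs" "xs ! t < h"
  shows "h \<notin> set (take t xs)"
proof -
  have "sorted_wrt (<) (take t xs @ [xs ! t])"
    using assms(1,2) sorted_wrt_take[of "(<)" xs "Suc t"] by (simp add: take_Suc_conv_app_nth)
  then have "\<forall>x\<in>set (take t xs). x < xs ! t" by (simp add: sorted_wrt_append)
  then show ?thesis using assms(3) by auto
qed

lemma card_bound_by_words:
  fixes f :: "nat \<Rightarrow> nat list" and M L q :: nat
  assumes "inj_on f {..<M}" and "\<And>m. m < M \<Longrightarrow> length (f m) = L \<and> set (f m) \<subseteq> {..<q}"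
  shows "M \<le> q ^ L"
proof -
  have "M = card (f ` {..<M})" using card_image[OF assms(1)] by simp
  also have "\<dots> \<le> card {xs. set xs \<subseteq> {..<q::nat} \<and> length xs = L}"
    by (rule card_mono) (use assms(2) in \<open>auto simp: finite_lists_length_eq\<close>)
  also have "\<dots> = q ^ L" by (simp add: card_lists_length_eq)
  finally show ?thesis .
qed

section \<open>The repair schedule of the cut-set argument\<close>

lemma stored_unrepaired:
  "(\<forall>u<t. fst (s ! u) \<noteq> j) \<Longrightarrow> stored S s m B am t j = enc S j m \<and> act s t j = 0"
  by (induction t) auto

definition repair_schedule :: "nat \<Rightarrow> nat list \<Rightarrow> schedule" where
  "repair_schedule d rs = map (\<lambda>i. (i, {..d} - {i})) rs"

lemma repair_schedule_nth:
  "t < length rs \<Longrightarrow> repair_schedule d rs ! t = (rs ! t, {..d} - {rs ! t})"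
  by (simp add: repair_schedule_def)

lemma length_repair_schedule [simp]: "length (repair_schedule d rs) = length rs"
  by (simp add: repair_schedule_def)

lemma repair_schedule_valid:
  assumes "\<forall>i\<in>set rs. i \<le> d" and "d < n"
  shows "valid_schedule n d (repair_schedule d rs)"
  using assms by (auto simp: valid_schedule_def repair_schedule_def card_Diff_singleton)

lemma repair_schedule_unrepaired:
  assumes "t \<le> length rs" and "j \<notin> set (take t rs)"
  shows "stored S (repair_schedule d rs) m B am t j = enc S j m \<and> act (repair_schedule d rs) t j = 0"
proof (rule stored_unrepaired, intro allI impI)
  fix u assume "u < t"
  then have "rs ! u \<in> set (take t rs)" using assms(1) by (auto simp: in_set_conv_nth)
  then show "fst (repair_schedule d rs ! u) \<noteq> j"
    using assms \<open>u < t\<close> by (auto simp: repair_schedule_nth)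
qed

definition initial_msg :: "scheme \<Rightarrow> schedule \<Rightarrow> nat \<Rightarrow> nat \<Rightarrow> nat \<Rightarrow> nat list" where
  "initial_msg S s m t j = hmsg S (take (Suc t) s) j (enc S j m)"

text \<open>The helpers of the repair of rs ! t that lie above rs ! t; they have not been repaired
  yet, so their messages are initial messages.\<close>
definition fresh_helpers :: "nat \<Rightarrow> nat list \<Rightarrow> (nat \<times> nat) list" where
  "fresh_helpers d rs = concat (map (\<lambda>t. map (Pair t) [Suc (rs ! t)..<Suc d]) [0..<length rs])"

lemma fresh_helpers_iff:
  "(t, j) \<in> set (fresh_helpers d rs) \<longleftrightarrow> t < length rs \<and> rs ! t < j \<and> j \<le> d"
  by (force simp: fresh_helpers_def simp del: upt_Suc)

lemma length_fresh_helpers: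
  "length (fresh_helpers d rs) = sum_list (map (\<lambda>i. d - i) rs)"
proof -
  have "map (\<lambda>t. d - rs ! t) [0..<length rs] = map (\<lambda>i. d - i) rs"
    by (rule nth_equalityI) auto
  then show ?thesis by (simp add: fresh_helpers_def length_concat o_def del: upt_Suc)
qed

section \<open>Two indistinguishable worlds\<close>

definition initial_nodes :: "nat set \<Rightarrow> node_id set" where
  "initial_nodes J = (\<lambda>j. (0, j)) ` J"

lemma initial_nodes_iff: "(a, j) \<in> initial_nodes J \<longleftrightarrow> a = 0 \<and> j \<in> J"
  by (auto simp: initial_nodes_def)

text \<open>What a controlled node reports when it pretends to be the initial node of its slot
  for file m (slots outside {..<n} are mapped to slot 0 only to keep the content well-formed).\<close>
definition forged_content :: "scheme \<Rightarrow> nat \<Rightarrow> nat \<Rightarrow> node_id \<Rightarrow> nat list" where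
  "forged_content S n m x = enc S (if snd x < n then snd x else 0) m"

text \<open>World A: file m, the adversary holds the initial nodes of the slots below b1
  and plays file m'.  World B: file m', it holds those of the slots b1..c-1 and plays file m.\<close>
locale two_worlds =
  fixes S :: scheme and n d k c b1 :: nat and rs :: "nat list" and m m' :: nat
  assumes rs_sorted: "sorted_wrt (<) rs"
    and rs_range: "set rs \<subseteq> {c..<k}"
    and k_le_d: "k \<le> d" and d_less_n: "d < n" and b1_le_c: "b1 \<le> c"
    and enc_agree: "\<And>i. c \<le> i \<Longrightarrow> i < k \<Longrightarrow> i \<notin> set rs \<Longrightarrow> enc S i m = enc S i m'"
    and msg_agree: "\<And>t j. (t, j) \<in> set (fresh_helpers d rs) \<Longrightarrow>
          initial_msg S (repair_schedule d rs) m t j = initial_msg S (repair_schedule d rs) m' t j"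
begin

abbreviation "s \<equiv> repair_schedule d rs"
abbreviation "BA \<equiv> initial_nodes {..<b1}"
abbreviation "BB \<equiv> initial_nodes {b1..<c}"
abbreviation "amA \<equiv> \<lambda>t x. initial_msg S s m' t (snd x)"
abbreviation "amB \<equiv> \<lambda>t x. initial_msg S s m t (snd x)"
abbreviation "storedA \<equiv> stored S s m BA amA"
abbreviation "storedB \<equiv> stored S s m' BB amB"

abbreviation "sentA t h \<equiv> if (act s t h, h) \<in> BA then amA t (act s t h, h)
                           else hmsg S (take (Suc t) s) h (storedA t h)"
abbreviation "sentB t h \<equiv> if (act s t h, h) \<in> BB then amB t (act s t h, h)
                           else hmsg S (take (Suc t) s) h (storedB t h)"

lemma low_slot_unrepaired: "h < c \<Longrightarrow> h \<notin> set (take t rs)"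
  using rs_range in_set_takeD by fastforce

lemma sent_agree:
  assumes t: "t < length rs" and h: "h \<le> d" "h \<noteq> rs ! t"
    and IH: "\<And>j. c \<le> j \<Longrightarrow> j < k \<Longrightarrow> j \<notin> set (drop t rs) \<Longrightarrow> storedA t j = storedB t j"
  shows "sentA t h = sentB t h"
proof (cases "h < c")
  case True
  then have "storedA t h = enc S h m" "storedB t h = enc S h m'" "act s t h = 0"
    using repair_schedule_unrepaired[of t rs h] low_slot_unrepaired t by auto
  then show ?thesis
    using True b1_le_c by (auto simp: initial_nodes_iff initial_msg_def)
next
  case False
  then have honest: "(act s t h, h) \<notin> BA" "(act s t h, h) \<notin> BB"
    using b1_le_c by (auto simp: initial_nodes_iff)
  have "rs ! t \<in> set rs" using t by simp
  then have rt: "rs ! t < k" using rs_range by auto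
  show ?thesis
  proof (cases "h < rs ! t")
    case True
    then have "storedA t h = storedB t h"
      using IH False rt sorted_less_notin_drop[OF rs_sorted t] by simp
    then show ?thesis using honest by simp
  next
    case above: False
    then have "h \<notin> set (take t rs)"
      using h sorted_greater_notin_take[OF rs_sorted t] by simp
    then have "storedA t h = enc S h m" "storedB t h = enc S h m'"
      using repair_schedule_unrepaired[of t rs h] t by auto
    moreover have "(t, h) \<in> set (fresh_helpers d rs)"
      using t h above by (simp add: fresh_helpers_iff)
    ultimately show ?thesis
      using honest msg_agree by (simp add: initial_msg_def)
  qed
qed

lemma stored_agree:
  "t \<le> length rs \<Longrightarrow> c \<le> j \<Longrightarrow> j < k \<Longrightarrow> j \<notin> set (drop t rs) \<Longrightarrow> storedA t j = storedB t j"
proof (induction t arbitrary: j)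
  case 0
  then show ?case using enc_agree by simp
next
  case (Suc t)
  have t: "t < length rs" using Suc.prems(1) by simp
  have drop_t: "drop t rs = rs ! t # drop (Suc t) rs" using t by (simp add: Cons_nth_drop_Suc)
  show ?case
  proof (cases "j = rs ! t")
    case True
    have "sentA t h = sentB t h" if "h \<in> {..d} - {rs ! t}" for h
      using sent_agree[OF t] Suc.IH t that by auto
    then show ?thesis using True t by (simp add: repair_schedule_nth cong: if_cong)
  next
    case False
    then show ?thesis using Suc drop_t by (simp add: repair_schedule_nth)
  qed
qed

lemma reported_agree:
  assumes "j < k"
  shows "reported S s m BA amA (forged_content S n m') j = reported S s m' BB amB (forged_content S n m) j"
proof (cases "j < c")
  case True
  then have "j \<notin> set (take (length rs) rs)" by (rule low_slot_unrepaired)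
  then have "storedA (length s) j = enc S j m" "storedB (length s) j = enc S j m'"
    "act s (length s) j = 0"
    using repair_schedule_unrepaired[of "length rs" rs j] by auto
  moreover have "j < n" using assms k_le_d d_less_n by simp
  ultimately show ?thesis
    using True by (auto simp: reported_def initial_nodes_iff forged_content_def)
next
  case False
  then have "storedA (length s) j = storedB (length s) j"
    using stored_agree[of "length rs" j] assms by simp
  then show ?thesis using False b1_le_c by (auto simp: reported_def initial_nodes_iff)
qed

end

section \<open>Resilience makes the fingerprint injective\<close>

text \<open>A resilient scheme decodes correctly in both worlds, so their files coincide.\<close>
lemma (in two_worlds) files_equal:
  assumes R: "resilient_scheme n k d b \<alpha> \<beta> q M S"
    and m: "m < M" and m': "m' < M" and b1_le_b: "b1 \<le> b" and c_le: "c - b1 \<le> b"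
  shows "m = m'"
proof -
  note R_def = R[unfolded resilient_scheme_def]
  have enc_ok: "\<And>j mm. j < n \<Longrightarrow> mm < M \<Longrightarrow> valid_word q \<alpha> (enc S j mm)"
    and msg_ok: "\<And>hist h c. valid_word q \<beta> (hmsg S hist h c)"
    using R_def by blast+
  note decodes = R_def[THEN conjunct2, THEN conjunct2, THEN conjunct2, rule_format]
  have sched: "valid_schedule n d s"
    by (rule repair_schedule_valid) (use rs_range k_le_d d_less_n in auto)
  have K: "{..<k} \<subseteq> {..<n}" using k_le_d d_less_n by auto
  have card: "card BA \<le> b" "card BB \<le> b"
    using card_image_le[of "{..<b1}" "\<lambda>j. (0::nat, j)"] card_image_le[of "{b1..<c}" "\<lambda>j. (0::nat, j)"]
      b1_le_b c_le by (auto simp: initial_nodes_def)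
  have fin: "finite BA" "finite BB" by (auto simp: initial_nodes_def)
  have am_ok: "\<And>t x. valid_word q \<beta> (amA t x)" "\<And>t x. valid_word q \<beta> (amB t x)"
    using msg_ok by (auto simp: initial_msg_def)
  have ac_ok: "\<And>x. valid_word q \<alpha> (forged_content S n m' x)"
      "\<And>x. valid_word q \<alpha> (forged_content S n m x)"
    using enc_ok m m' d_less_n by (auto simp: forged_content_def)
  have "(\<lambda>j. if j \<in> {..<k} then reported S s m BA amA (forged_content S n m') j else [])
      = (\<lambda>j. if j \<in> {..<k} then reported S s m' BB amB (forged_content S n m) j else [])"
    using reported_agree by auto
  moreover have "dec S s {..<k} (\<lambda>j. if j \<in> {..<k} then reported S s m BA amA (forged_content S n m') j else []) = m"
    by (rule decodes[OF sched m fin(1) card(1) am_ok(1) ac_ok(1) K]) simp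
  moreover have "dec S s {..<k} (\<lambda>j. if j \<in> {..<k} then reported S s m' BB amB (forged_content S n m) j else []) = m'"
    by (rule decodes[OF sched m' fin(2) card(2) am_ok(2) ac_ok(2) K]) simp
  ultimately show ?thesis by simp
qed

definition fingerprint_words :: "scheme \<Rightarrow> nat \<Rightarrow> nat list \<Rightarrow> nat list \<Rightarrow> nat \<Rightarrow> nat list list" where
  "fingerprint_words S d rs as m =
     map (\<lambda>i. enc S i m) as @ map (\<lambda>(t, j). initial_msg S (repair_schedule d rs) m t j) (fresh_helpers d rs)"

lemma fingerprint_word_lengths:
  assumes R: "resilient_scheme n k d b \<alpha> \<beta> q M S" and m: "m < M" and as: "set as \<subseteq> {..<n}"
  shows "map length (fingerprint_words S d rs as m)
       = map (\<lambda>_. \<alpha>) as @ map (\<lambda>_. \<beta>) (fresh_helpers d rs)"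
    and "set (concat (fingerprint_words S d rs as m)) \<subseteq> {..<q}"
proof -
  have enc_ok: "\<And>i. i \<in> set as \<Longrightarrow> valid_word q \<alpha> (enc S i m)"
    using R m as by (auto simp: resilient_scheme_def)
  have msg_ok: "\<And>hist h c. valid_word q \<beta> (hmsg S hist h c)"
    using R by (simp add: resilient_scheme_def)
  show "map length (fingerprint_words S d rs as m)
       = map (\<lambda>_. \<alpha>) as @ map (\<lambda>_. \<beta>) (fresh_helpers d rs)"
    using enc_ok msg_ok by (auto simp: valid_word_def fingerprint_words_def initial_msg_def)
  show "set (concat (fingerprint_words S d rs as m)) \<subseteq> {..<q}"
    using enc_ok msg_ok by (fastforce simp: valid_word_def fingerprint_words_def initial_msg_def)
qed

text \<open>Equal fingerprints give two indistinguishable worlds, hence the fingerprint is injective,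
  as long as at most 2b slots are handed to the adversary.\<close>
lemma fingerprint_inj:
  assumes R: "resilient_scheme n k d b \<alpha> \<beta> q M S"
    and kd: "k \<le> d" and dn: "d < n" and c: "c \<le> 2 * b"
    and rs: "sorted_wrt (<) rs" "set rs \<subseteq> {c..<k}"
    and as: "set as \<subseteq> {..<k}" "\<And>i. c \<le> i \<Longrightarrow> i < k \<Longrightarrow> i \<notin> set rs \<Longrightarrow> i \<in> set as"
  shows "inj_on (\<lambda>m. concat (fingerprint_words S d rs as m)) {..<M}"
proof (rule inj_onI)
  fix m m' assume m: "m \<in> {..<M}" and m': "m' \<in> {..<M}"
    and eq: "concat (fingerprint_words S d rs as m) = concat (fingerprint_words S d rs as m')"
  have as_n: "set as \<subseteq> {..<n}" using as(1) kd dn by auto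
  have "map length (fingerprint_words S d rs as m) = map length (fingerprint_words S d rs as m')"
    using fingerprint_word_lengths(1)[OF R _ as_n] m m' by simp
  then have "fingerprint_words S d rs as m = fingerprint_words S d rs as m'"
    using concat_eq_by_lengths[OF eq] by blast
  then have enc_eq: "map (\<lambda>i. enc S i m) as = map (\<lambda>i. enc S i m') as"
    and msg_eq: "map (\<lambda>(t, j). initial_msg S (repair_schedule d rs) m t j) (fresh_helpers d rs)
               = map (\<lambda>(t, j). initial_msg S (repair_schedule d rs) m' t j) (fresh_helpers d rs)"
    by (simp_all add: fingerprint_words_def)
  interpret two_worlds S n d k c "min b c" rs m m'
    using rs kd dn enc_eq msg_eq as(2) by unfold_locales auto
  show "m = m'"
    by (rule files_equal[OF R]) (use m m' c in auto)
qed

section \<open>The capacity bound\<close>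

lemma files_bound:
  assumes kd: "k \<le> d" and dn: "d < n" and R: "resilient_scheme n k d b \<alpha> \<beta> q M S"
  shows "M \<le> q ^ (\<Sum>i\<in>{min (2*b) k..<k}. min ((d - i) * \<beta>) \<alpha>)"
proof -
  define c where "c = min (2*b) k"
  define P where "P i \<longleftrightarrow> (d - i) * \<beta> < \<alpha>" for i
  define rs where "rs = filter P [c..<k]"
  define as where "as = filter (\<lambda>i. \<not> P i) [c..<k]"
  define fp where "fp m = concat (fingerprint_words S d rs as m)" for m
  have rs: "sorted_wrt (<) rs" "set rs \<subseteq> {c..<k}"
    unfolding rs_def by (auto intro: sorted_wrt_filter)
  have as: "set as \<subseteq> {..<k}" "\<And>i. c \<le> i \<Longrightarrow> i < k \<Longrightarrow> i \<notin> set rs \<Longrightarrow> i \<in> set as"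
    unfolding rs_def as_def by auto
  have inj: "inj_on fp {..<M}"
    unfolding fp_def by (rule fingerprint_inj[OF R kd dn _ rs as]) (simp add: c_def)
  have "(\<Sum>i\<in>{c..<k}. min ((d - i) * \<beta>) \<alpha>) = sum_list (map (\<lambda>i. min ((d - i) * \<beta>) \<alpha>) [c..<k])"
    by (simp add: interv_sum_list_conv_sum_set_nat)
  also have "\<dots> = sum_list (map (\<lambda>i. if P i then (d - i) * \<beta> else \<alpha>) [c..<k])"
    by (intro arg_cong[where f = sum_list] map_cong) (auto simp: P_def)
  also have "\<dots> = sum_list (map (\<lambda>i. (d - i) * \<beta>) rs) + sum_list (map (\<lambda>_. \<alpha>) as)"
    unfolding rs_def as_def by (rule sum_list_filter_partition[symmetric])
  also have "\<dots> = \<beta> * length (fresh_helpers d rs) + \<alpha> * length as"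
    by (simp add: length_fresh_helpers sum_list_const_mult sum_list_triv mult.commute)
  finally have L: "(\<Sum>i\<in>{c..<k}. min ((d - i) * \<beta>) \<alpha>) = \<alpha> * length as + \<beta> * length (fresh_helpers d rs)"
    by simp
  have as_n: "set as \<subseteq> {..<n}" using kd dn by (auto simp: as_def)
  have "length (fp m) = (\<Sum>i\<in>{c..<k}. min ((d - i) * \<beta>) \<alpha>) \<and> set (fp m) \<subseteq> {..<q}"
    if "m < M" for m
    using fingerprint_word_lengths[OF R that as_n, of rs] unfolding L fp_def
    by (simp add: length_concat sum_list_triv)
  then show ?thesis
    using card_bound_by_words[OF inj] unfolding c_def by blast
qed

lemma capacity_le_cut_sum:
  assumes "k \<le> d" and "d < n"
  shows "resiliency_capacity n k d b \<alpha> \<beta>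
           \<le> ereal (real (\<Sum>i\<in>{min (2*b) k..<k}. min ((d - i) * \<beta>) \<alpha>))"
  unfolding resiliency_capacity_def
proof (rule Sup_least, clarify)
  fix q M S assume q: "2 \<le> q" and M: "1 \<le> M" and R: "resilient_scheme n k d b \<alpha> \<beta> q M S"
  define L where "L = (\<Sum>i\<in>{min (2*b) k..<k}. min ((d - i) * \<beta>) \<alpha>)"
  have "real M \<le> real q ^ L"
    using files_bound[OF assms R] unfolding L_def by (metis of_nat_le_iff of_nat_power)
  then have "log (real q) (real M) \<le> log (real q) (real q ^ L)"
    using q M by (subst log_le_cancel_iff) auto
  also have "\<dots> = real L" using q by (simp add: log_nat_power)
  finally show "ereal (log (real q) (real M)) \<le> ereal (real L)" by simp
qed

text \<open>Storing a single file is always possible, so the capacity is nonnegative.\<close>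
lemma capacity_nonneg: "0 \<le> resiliency_capacity n k d b \<alpha> \<beta>"
proof -
  define S where "S = \<lparr>enc = \<lambda>j m. replicate \<alpha> 0, hmsg = \<lambda>h x c. replicate \<beta> 0,
                       rep = \<lambda>h r. replicate \<alpha> 0, dec = \<lambda>s K c. 0\<rparr>"
  have "resilient_scheme n k d b \<alpha> \<beta> 2 1 S"
    unfolding resilient_scheme_def valid_word_def S_def by auto
  then have "ereal (log (real 2) (real 1)) \<le> resiliency_capacity n k d b \<alpha> \<beta>"
    unfolding resiliency_capacity_def by (intro Sup_upper) blast
  then show ?thesis by (simp add: zero_ereal_def)
qed

theorem theorem3:
  fixes n k d b \<alpha> \<beta> :: nat
  assumes "k \<le> d" and "d + 1 \<le> n" and "1 \<le> b"
  shows "(2 * b < k \<longrightarrow>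
            resiliency_capacity n k d b \<alpha> \<beta>
              \<le> ereal (real (\<Sum>i\<in>{2*b+1..k}. min ((d + 1 - i) * \<beta>) \<alpha>)))
       \<and> (k \<le> 2 * b \<longrightarrow> resiliency_capacity n k d b \<alpha> \<beta> = 0)"
proof -
  have bound: "resiliency_capacity n k d b \<alpha> \<beta>
           \<le> ereal (real (\<Sum>i\<in>{min (2*b) k..<k}. min ((d - i) * \<beta>) \<alpha>))"
    using capacity_le_cut_sum assms(1,2) by simp
  have reindex: "(\<Sum>i\<in>{min (2*b) k..<k}. min ((d - i) * \<beta>) \<alpha>)
             = (\<Sum>i\<in>{2*b+1..k}. min ((d + 1 - i) * \<beta>) \<alpha>)" if "2 * b < k"
    using that sum.shift_bounds_cl_Suc_ivl[of "\<lambda>i. min ((d + 1 - i) * \<beta>) \<alpha>" "2*b" "k - 1"]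
    by (simp add: atLeastLessThanSuc_atLeastAtMost[symmetric])
  have small_b: "resiliency_capacity n k d b \<alpha> \<beta>
              \<le> ereal (real (\<Sum>i\<in>{2*b+1..k}. min ((d + 1 - i) * \<beta>) \<alpha>))" if "2 * b < k"
    using bound unfolding reindex[OF that] .
  have large_b: "resiliency_capacity n k d b \<alpha> \<beta> = 0" if "k \<le> 2 * b"
  proof (rule order_antisym)
    show "resiliency_capacity n k d b \<alpha> \<beta> \<le> 0"
      using bound that by (simp add: zero_ereal_def)
  qed (rule capacity_nonneg)
  from small_b large_b show ?thesis by blast
qed

end
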